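(* Let $N\ge1$, generic complex $q,\gamma,s_0,\xi_0$, and $u_i,v_j$ with $|u_iv_j|<1$ for all $i,j$. Then $$\frac{\det[\mathsf z(u_i,v_j)]_{i,j=1}^N}{\prod_{1\le i<j\le N}(u_i-u_j)(v_i-v_j)}=\sum_{\lambda\in\mathrm{Sign}_N}\mathsf C_\lambda(u_1,\dots,u_N)\,s_\lambda(v_1,\dots,v_N),$$ where $\mathsf C_\lambda$ is the symmetric polynomial $$\mathsf C_\lambda(u_1,\dots,u_N)=\frac{\det[\mathsf c_{\lambda_i+N-i}(u_j)]_{i,j=1}^N}{\prod_{1\le i<j\le N}(u_i-u_j)},$$ $$\mathsf c_k(u)=u^k\Big\{1-\gamma q^{k+1}+s_0^2\gamma(\gamma-q^k)-s_0\gamma\big((1-q^k)(u\xi_0)^{-1}+(1-q^{k+1})u\xi_0\big)\Big\},$$ and equivalently $$\mathsf C_\lambda=\det\Big[-\gamma s_0\xi_0^{-1}(1-q^{\lambda_j+N-j})h_{\lambda_j+i-j-1}+\big(1+\gamma^2s_0^2-\gamma(q+s_0^2)q^{\lambda_j+N-j}\big)h_{\lambda_j+i-j}-\gamma s_0\xi_0(1-q^{\lambda_j+N-j+1})h_{\lambda_j+i-j+1}\Big]_{i,j=1}^N,$$ with $h_k=h_k(u_1,\dots,u_N)$. In particular, when $s_0=0$, $\mathsf C_\lambda=\prod_{j=1}^N(1-\gamma q\cdot q^{\lambda_j+N-j})\,s_\lambda(u_1,\dots,u_N)$.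
   Context: $\mathrm{Sign}_N$ is the set of integer sequences $\lambda=(\lambda_1\ge\dots\ge\lambda_N\ge0)$. $\mathsf z(u,v)=\frac{(1-\gamma)(q-\gamma s_0^2)(1-uv)+(1-q)(1-\gamma\xi_0s_0u)(1-\gamma\xi_0^{-1}s_0v)}{(1-uv)(1-quv)}$. $s_\lambda(v_1,\dots,v_N)=\det[v_i^{\lambda_j+N-j}]/\prod_{i<j}(v_i-v_j)$ is the Schur polynomial, and $h_k$ is the complete homogeneous symmetric polynomial of degree $k$, with $h_0=1$ and $h_k=0$ for $k<0$. *)

theory Defs
  imports Complex_Main "HOL-Analysis.Infinite_Sum" "Jordan_Normal_Form.Determinant"
begin

text \<open>All indices are 0-based: i ranges over 0..N-1 (paper: 1..N).\<close>

definition Sign :: "nat \<Rightarrow> (nat \<Rightarrow> nat) set" where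
  "Sign N = {lam. (\<forall>i j. i \<le> j \<longrightarrow> j < N \<longrightarrow> lam j \<le> lam i) \<and> (\<forall>i\<ge>N. lam i = 0)}"

definition vandermonde :: "nat \<Rightarrow> (nat \<Rightarrow> complex) \<Rightarrow> complex" where
  "vandermonde N x = (\<Prod>j<N. \<Prod>i<j. (x i - x j))"

definition zfun :: "complex \<Rightarrow> complex \<Rightarrow> complex \<Rightarrow> complex \<Rightarrow> complex \<Rightarrow> complex \<Rightarrow> complex" where
  "zfun q \<gamma> s0 \<xi>0 u v =
     ((1 - \<gamma>) * (q - \<gamma> * s0^2) * (1 - u * v)
       + (1 - q) * (1 - \<gamma> * \<xi>0 * s0 * u) * (1 - \<gamma> * inverse \<xi>0 * s0 * v))
     / ((1 - u * v) * (1 - q * u * v))"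

definition schur :: "nat \<Rightarrow> (nat \<Rightarrow> nat) \<Rightarrow> (nat \<Rightarrow> complex) \<Rightarrow> complex" where
  "schur N lam v = det (mat N N (\<lambda>(i,j). v i ^ (lam j + (N - 1 - j)))) / vandermonde N v"

definition hcomplete :: "nat \<Rightarrow> int \<Rightarrow> (nat \<Rightarrow> complex) \<Rightarrow> complex" where
  "hcomplete N k u = (if k < 0 then 0 else
     (\<Sum>\<alpha>\<in>{\<alpha>::nat \<Rightarrow> nat. (\<forall>i\<ge>N. \<alpha> i = 0) \<and> int (\<Sum>i<N. \<alpha> i) = k}. \<Prod>i<N. u i ^ \<alpha> i))"

definition cfun :: "complex \<Rightarrow> complex \<Rightarrow> complex \<Rightarrow> complex \<Rightarrow> nat \<Rightarrow> complex \<Rightarrow> complex" where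
  "cfun q \<gamma> s0 \<xi>0 k u = u ^ k *
     (1 - \<gamma> * q ^ (k + 1) + s0^2 * \<gamma> * (\<gamma> - q ^ k)
      - s0 * \<gamma> * ((1 - q ^ k) * inverse (u * \<xi>0) + (1 - q ^ (k + 1)) * u * \<xi>0))"

definition Cfun :: "complex \<Rightarrow> complex \<Rightarrow> complex \<Rightarrow> complex \<Rightarrow> nat \<Rightarrow> (nat \<Rightarrow> nat) \<Rightarrow> (nat \<Rightarrow> complex) \<Rightarrow> complex" where
  "Cfun q \<gamma> s0 \<xi>0 N lam u =
     det (mat N N (\<lambda>(i,j). cfun q \<gamma> s0 \<xi>0 (lam i + (N - 1 - i)) (u j))) / vandermonde N u"

end

theory Submission
  imports Defs
begin

text \<open>
  Each entry \<open>z(u\<^sub>i, v\<^sub>j)\<close> is the sum of two geometric series, \<open>\<Sum>\<^sub>k c\<^sub>k(u\<^sub>i) v\<^sub>j\<^sup>k\<close>.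
  Expanding the determinant multilinearly in its rows writes \<open>det[z(u\<^sub>i, v\<^sub>j)]\<close> as a sum over
  index maps \<open>\<kappa>\<close> of \<open>\<Prod>\<^sub>i c\<^bsub>\<kappa> i\<^esub>(u\<^sub>i) \<cdot> det[v\<^sub>j\<^bsup>\<kappa> i\<^esup>]\<close>. Only injective \<open>\<kappa>\<close> contribute, and
  they factor uniquely as \<open>\<kappa> = (\<lambda> + \<delta>) \<circ> \<tau>\<close> with \<open>\<lambda> \<in> Sign\<^sub>N\<close>, \<open>\<delta> = (N-1, \<dots>, 0)\<close> and \<open>\<tau>\<close> a
  permutation; summing over \<open>\<tau>\<close> gives \<open>det[c\<^bsub>(\<lambda>+\<delta>)\<^sub>i\<^esub>(u\<^sub>j)] \<cdot> det[v\<^sub>j\<^bsup>(\<lambda>+\<delta>)\<^sub>i\<^esup>]\<close>, which is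
  \<open>V(u) V(v) C\<^sub>\<lambda>(u) s\<^sub>\<lambda>(v)\<close>.

  For the determinantal formula, multiply \<open>[c\<^bsub>(\<lambda>+\<delta>)\<^sub>j\<^esub>(u\<^sub>k)]\<close> from the left by
  \<open>W = [u\<^sub>k\<^sup>i / \<Prod>\<^bsub>l\<noteq>k\<^esub> (u\<^sub>k - u\<^sub>l)]\<close>. The entries of the product are divided differences of
  powers, \<open>\<Sum>\<^sub>k u\<^sub>k\<^sup>m / \<Prod>\<^bsub>l\<noteq>k\<^esub> (u\<^sub>k - u\<^sub>l) = h\<^bsub>m-N+1\<^esub>(u)\<close>; by the same identity \<open>W\<close> times
  the Vandermonde matrix is unitriangular, so \<open>det W = 1 / V(u)\<close>.
\<close>

lemma det_mat_leibniz:
  "det (mat n n (\<lambda>(i,j). f i j)) =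
   (\<Sum>p | p permutes {..<n}. signof p * (\<Prod>i<n. f i (p i)))"
  by (subst det_def'[of _ n]) (auto simp: atLeast0LessThan intro!: sum.cong prod.cong)

lemma det_mat_swap:
  "det (mat n n (\<lambda>(i,j). f j i)) = det (mat n n (\<lambda>(i,j). f i j))"
proof -
  have "mat n n (\<lambda>(i,j). f j i) = (mat n n (\<lambda>(i,j). f i j))\<^sup>T"
    by (rule eq_matI) auto
  then show ?thesis using det_transpose[of "mat n n (\<lambda>(i,j). f i j)" n] by simp
qed

lemma det_mat_mult:
  "det (mat n n (\<lambda>(i,j). \<Sum>k<n. f i k * g k j)) =
   det (mat n n (\<lambda>(i,j). f i j)) * det (mat n n (\<lambda>(i,j). g i j))"
proof -
  have "mat n n (\<lambda>(i,j). \<Sum>k<n. f i k * g k j) = mat n n (\<lambda>(i,j). f i j) * mat n n (\<lambda>(i,j). g i j)"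
    by (rule eq_matI) (auto simp: scalar_prod_def atLeast0LessThan intro!: sum.cong)
  then show ?thesis by (simp add: det_mult[of _ n])
qed

lemma det_mat_scale_rows:
  "det (mat n n (\<lambda>(i,j). c i * f i j)) = (\<Prod>i<n. c i) * det (mat n n (\<lambda>(i,j). f i j))"
  unfolding det_mat_leibniz
  by (simp add: sum_distrib_left prod.distrib mult.assoc mult.left_commute)

lemma det_mat_scale_cols:
  "det (mat n n (\<lambda>(i,j). f i j * c j)) = (\<Prod>j<n. c j) * det (mat n n (\<lambda>(i,j). f i j))"
  using det_mat_scale_rows[of n c "\<lambda>i j. f j i"] det_mat_swap[of n "\<lambda>i j. c i * f j i"]
    det_mat_swap[of n f] by (simp add: mult.commute)

lemma det_mat_unit_lower_triangular:
  assumes "\<And>i j. i < j \<Longrightarrow> j < n \<Longrightarrow> f i j = 0" and "\<And>i. i < n \<Longrightarrow> f i i = 1"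
  shows "det (mat n n (\<lambda>(i,j). f i j)) = 1"
proof -
  have "det (mat n n (\<lambda>(i,j). f i j)) = prod_list (diag_mat (mat n n (\<lambda>(i,j). f i j)))"
    by (rule det_lower_triangular[of n]) (auto simp: assms)
  also have "diag_mat (mat n n (\<lambda>(i,j). f i j)) = replicate n 1"
    by (auto simp: diag_mat_def assms intro!: nth_equalityI)
  finally show ?thesis by simp
qed

lemma det_mat_unit_last_col:
  assumes "\<And>i. i < n \<Longrightarrow> f i n = 0" and "f n n = 1"
  shows "det (mat (Suc n) (Suc n) (\<lambda>(i,j). f i j)) = det (mat n n (\<lambda>(i,j). f i j))"
proof -
  let ?A = "mat (Suc n) (Suc n) (\<lambda>(i,j). f i j)"
  have "det ?A = (\<Sum>i<Suc n. ?A $$ (i,n) * cofactor ?A i n)"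
    by (rule laplace_expansion_column) auto
  also have "\<dots> = cofactor ?A n n"
    by (subst sum.remove[of _ n]) (auto simp: assms intro!: sum.neutral)
  also have "mat_delete ?A n n = mat n n (\<lambda>(i,j). f i j)"
    by (rule eq_matI) (auto simp: mat_delete_def)
  then have "cofactor ?A n n = det (mat n n (\<lambda>(i,j). f i j))"
    by (simp add: cofactor_def)
  finally show ?thesis .
qed

lemma det_mat_permute_rows:
  assumes "\<tau> permutes {..<n}"
  shows "det (mat n n (\<lambda>(i,j). f (\<tau> i) j)) = signof \<tau> * det (mat n n (\<lambda>(i,j). f i j))"
proof -
  have "mat n n (\<lambda>(i,j). f (\<tau> i) j) = mat n n (\<lambda>(i,j). mat n n (\<lambda>(i,j). f i j) $$ (\<tau> i, j))"
    using permutes_in_image[OF assms] by (intro eq_matI) auto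
  also have "det \<dots> = signof \<tau> * det (mat n n (\<lambda>(i,j). f i j))"
    by (rule det_permute_rows) (use assms in \<open>auto simp: atLeast0LessThan\<close>)
  finally show ?thesis .
qed

lemma det_mat_non_inj_rows:
  assumes "\<not> inj_on \<kappa> {..<n}"
  shows "det (mat n n (\<lambda>(i,j). f (\<kappa> i) j)) = 0"
proof -
  obtain i i' where "i < n" "i' < n" "i \<noteq> i'" "\<kappa> i = \<kappa> i'"
    using assms unfolding inj_on_def by auto
  then show ?thesis by (intro det_identical_rows[of _ n i i']) auto
qed

lemma vandermonde_Suc: "vandermonde (Suc n) x = vandermonde n x * (\<Prod>i<n. x i - x n)"
  by (simp add: vandermonde_def)

text \<open>The row operations \<open>row\<^sub>i - x\<^sub>n \<cdot> row\<^sub>i\<^sub>+\<^sub>1\<close> (left multiplication by the unit bidiagonal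
  matrix \<open>f\<close>) turn the last column into a unit vector and leave a column-scaled Vandermonde
  matrix of size \<open>n\<close>.\<close>
lemma det_vandermonde:
  "det (mat n n (\<lambda>(i,j). x j ^ (n - 1 - i))) = vandermonde n x"
proof (induction n)
  case 0
  then show ?case by (simp add: vandermonde_def det_def)
next
  case (Suc n)
  define f where "f i k = (if k = i then 1 else if k = Suc i then - x n else 0)" for i k
  define g where "g k j = x j ^ (n - k)" for k j
  define B where "B i j = (if i < n then x j ^ (n - 1 - i) * (x j - x n) else 1)" for i j
  have fg: "(\<Sum>k<Suc n. f i k * g k j) = B i j" if "i < Suc n" for i j
  proof -
    have "(\<Sum>k<Suc n. f i k * g k j) = (\<Sum>k<Suc n. (if k = i then g i j else 0)
          + (if k = Suc i then - x n * g (Suc i) j else 0))"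
      by (rule sum.cong) (auto simp: f_def)
    also have "\<dots> = g i j + (if i < n then - x n * g (Suc i) j else 0)"
      using that by (simp add: sum.distrib)
    also have "\<dots> = B i j"
    proof (cases "i < n")
      case True
      then have "n - i = Suc (n - 1 - i)" by simp
      then show ?thesis using True by (simp add: g_def B_def algebra_simps)
    qed (use that in \<open>simp add: g_def B_def\<close>)
    finally show ?thesis .
  qed
  have det_f: "det (mat (Suc n) (Suc n) (\<lambda>(i,j). f i j)) = 1"
    using det_mat_unit_lower_triangular[of "Suc n" "\<lambda>i j. f j i"] det_mat_swap[of "Suc n" f]
    by (auto simp: f_def)
  have "det (mat (Suc n) (Suc n) (\<lambda>(i,j). x j ^ (Suc n - 1 - i))) =
      det (mat (Suc n) (Suc n) (\<lambda>(i,j). \<Sum>k<Suc n. f i k * g k j))"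
    using det_mat_mult[of "Suc n" f g] det_f by (simp add: g_def)
  also have "mat (Suc n) (Suc n) (\<lambda>(i,j). \<Sum>k<Suc n. f i k * g k j) = mat (Suc n) (Suc n) (\<lambda>(i,j). B i j)"
    by (rule eq_matI) (simp_all add: fg del: sum.lessThan_Suc)
  also have "det \<dots> = det (mat n n (\<lambda>(i,j). B i j))"
    by (rule det_mat_unit_last_col) (auto simp: B_def)
  also have "mat n n (\<lambda>(i,j). B i j) = mat n n (\<lambda>(i,j). x j ^ (n - 1 - i) * (x j - x n))"
    by (rule eq_matI) (auto simp: B_def)
  also have "det \<dots> = (\<Prod>j<n. x j - x n) * vandermonde n x"
    using det_mat_scale_cols[of n "\<lambda>i j. x j ^ (n - 1 - i)" "\<lambda>j. x j - x n"] Suc.IH by simp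
  finally show ?case by (simp add: vandermonde_Suc mult.commute)
qed

section \<open>Complete homogeneous symmetric polynomials\<close>

definition weak_compositions :: "nat \<Rightarrow> nat \<Rightarrow> (nat \<Rightarrow> nat) set" where
  "weak_compositions n k = {\<alpha>. (\<forall>i\<ge>n. \<alpha> i = 0) \<and> (\<Sum>i<n. \<alpha> i) = k}"

lemma hcomplete_of_nat:
  "hcomplete n (int k) u = (\<Sum>\<alpha>\<in>weak_compositions n k. \<Prod>i<n. u i ^ \<alpha> i)"
  unfolding hcomplete_def weak_compositions_def by (simp flip: of_nat_sum)

lemma hcomplete_neg: "k < 0 \<Longrightarrow> hcomplete n k u = 0"
  unfolding hcomplete_def by simp

lemma finite_weak_compositions: "finite (weak_compositions n k)"
proof -
  have "inj_on (\<lambda>\<alpha>. restrict \<alpha> {..<n}) (weak_compositions n k)"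
    by (rule inj_onI) (auto simp: weak_compositions_def fun_eq_iff restrict_def, metis not_le)
  moreover have "(\<lambda>\<alpha>. restrict \<alpha> {..<n}) ` weak_compositions n k \<subseteq> {..<n} \<rightarrow>\<^sub>E {..k}"
  proof clarify
    fix \<alpha> assume "\<alpha> \<in> weak_compositions n k"
    then have "\<alpha> i \<le> k" if "i < n" for i
      using that member_le_sum[of i "{..<n}" \<alpha>] by (auto simp: weak_compositions_def)
    then show "restrict \<alpha> {..<n} \<in> {..<n} \<rightarrow>\<^sub>E {..k}" by auto
  qed
  ultimately show ?thesis
    by (meson finite_PiE finite_atMost finite_imageD finite_lessThan finite_subset)
qed

lemma hcomplete_0: "hcomplete 0 k u = (if k = 0 then 1 else 0)"
proof (cases "k < 0")
  case False
  then obtain m where k: "k = int m" by (metis nonneg_int_cases not_less)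
  have "weak_compositions 0 m = (if m = 0 then {\<lambda>_. 0} else {})"
    by (auto simp: weak_compositions_def)
  then show ?thesis by (simp add: k hcomplete_of_nat)
qed (simp add: hcomplete_neg)

lemma hcomplete_Suc:
  "hcomplete (Suc n) (int k) u = (\<Sum>a\<le>k. u n ^ a * hcomplete n (int (k - a)) u)"
proof -
  have "hcomplete (Suc n) (int k) u = (\<Sum>\<alpha>\<in>weak_compositions (Suc n) k. \<Prod>i<Suc n. u i ^ \<alpha> i)"
    by (rule hcomplete_of_nat)
  also have "\<dots> = (\<Sum>(a,\<beta>)\<in>Sigma {..k} (\<lambda>a. weak_compositions n (k - a)). u n ^ a * (\<Prod>i<n. u i ^ \<beta> i))"
  proof (rule sum.reindex_bij_witness[where i = "\<lambda>(a,\<beta>). \<beta>(n := a)" and j = "\<lambda>\<alpha>. (\<alpha> n, \<alpha>(n := 0))"])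
    fix ab assume "ab \<in> Sigma {..k} (\<lambda>a. weak_compositions n (k - a))"
    then obtain a \<beta> where ab: "ab = (a, \<beta>)" "a \<le> k" "\<beta> \<in> weak_compositions n (k - a)"
      by auto
    have "(\<Sum>i<n. (\<beta>(n := a)) i) = (\<Sum>i<n. \<beta> i)" by (rule sum.cong) auto
    with ab show "(case ab of (a, \<beta>) \<Rightarrow> \<beta>(n := a)) \<in> weak_compositions (Suc n) k"
      and "(case (case ab of (a, \<beta>) \<Rightarrow> \<beta>(n := a)) of \<alpha> \<Rightarrow> (\<alpha> n, \<alpha>(n := 0))) = ab"
      by (auto simp: weak_compositions_def fun_eq_iff)
  next
    fix \<alpha> assume \<alpha>: "\<alpha> \<in> weak_compositions (Suc n) k"
    have "(\<Sum>i<n. (\<alpha>(n := 0)) i) = (\<Sum>i<n. \<alpha> i)" by (rule sum.cong) auto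
    with \<alpha> show "(\<alpha> n, \<alpha>(n := 0)) \<in> Sigma {..k} (\<lambda>a. weak_compositions n (k - a))"
      by (auto simp: weak_compositions_def)
    have "(\<Prod>i<n. u i ^ (\<alpha>(n := 0)) i) = (\<Prod>i<n. u i ^ \<alpha> i)" by (rule prod.cong) auto
    then show "(case (\<alpha> n, \<alpha>(n := 0)) of (a, \<beta>) \<Rightarrow> u n ^ a * (\<Prod>i<n. u i ^ \<beta> i)) =
        (\<Prod>i<Suc n. u i ^ \<alpha> i)"
      by (simp add: mult.commute)
  qed auto
  also have "\<dots> = (\<Sum>a\<le>k. \<Sum>\<beta>\<in>weak_compositions n (k - a). u n ^ a * (\<Prod>i<n. u i ^ \<beta> i))"
    by (subst sum.Sigma) (auto simp: finite_weak_compositions)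
  also have "\<dots> = (\<Sum>a\<le>k. u n ^ a * hcomplete n (int (k - a)) u)"
    by (simp only: hcomplete_of_nat sum_distrib_left)
  finally show ?thesis .
qed

lemma hcomplete_zero: "hcomplete n 0 u = 1"
proof (induction n)
  case (Suc n)
  then show ?case using hcomplete_Suc[of n 0 u] by simp
qed (simp add: hcomplete_0)

lemma hcomplete_Suc_rec:
  "hcomplete (Suc n) k u = hcomplete n k u + u n * hcomplete (Suc n) (k - 1) u"
proof (cases "k \<le> 0")
  case True
  then show ?thesis by (cases "k = 0") (simp_all add: hcomplete_neg hcomplete_zero)
next
  case False
  define m where "m = nat k - 1"
  have k: "k = int (Suc m)" using False by (simp add: m_def)
  have "hcomplete (Suc n) k u = hcomplete n k u + (\<Sum>a\<le>m. u n ^ Suc a * hcomplete n (int (m - a)) u)"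
    unfolding k hcomplete_Suc by (subst sum.atMost_Suc_shift) simp
  also have "(\<Sum>a\<le>m. u n ^ Suc a * hcomplete n (int (m - a)) u) = u n * hcomplete (Suc n) (k - 1) u"
    by (simp add: k hcomplete_Suc sum_distrib_left mult.assoc)
  finally show ?thesis .
qed

section \<open>Divided differences of powers\<close>

definition divided_power :: "nat set \<Rightarrow> (nat \<Rightarrow> 'a::field) \<Rightarrow> nat \<Rightarrow> 'a" where
  "divided_power S u p = (\<Sum>k\<in>S. u k ^ p / (\<Prod>l\<in>S - {k}. u k - u l))"

lemma divided_power_Suc:
  assumes "finite S" "inj_on u S" "j \<in> S"
  shows "divided_power S u (Suc p) - u j * divided_power S u p = divided_power (S - {j}) u p"
proof -
  have "divided_power S u (Suc p) - u j * divided_power S u p =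
      (\<Sum>k\<in>S. (u k - u j) * u k ^ p / (\<Prod>l\<in>S - {k}. u k - u l))"
    unfolding divided_power_def
    by (simp add: sum_distrib_left sum_subtractf[symmetric] algebra_simps diff_divide_distrib)
  also have "\<dots> = (\<Sum>k\<in>S - {j}. (u k - u j) * u k ^ p / (\<Prod>l\<in>S - {k}. u k - u l))"
    using assms by (subst sum.remove[of _ j]) auto
  also have "\<dots> = divided_power (S - {j}) u p"
    unfolding divided_power_def
  proof (rule sum.cong[OF refl])
    fix k assume k: "k \<in> S - {j}"
    have "S - {k} = insert j (S - {j} - {k})" using k assms by auto
    then have "(\<Prod>l\<in>S - {k}. u k - u l) = (u k - u j) * (\<Prod>l\<in>S - {j} - {k}. u k - u l)"
      using assms by simp
    moreover have "u k - u j \<noteq> 0" using assms k by (auto simp: inj_on_def)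
    ultimately show "(u k - u j) * u k ^ p / (\<Prod>l\<in>S - {k}. u k - u l) =
        u k ^ p / (\<Prod>l\<in>S - {j} - {k}. u k - u l)"
      by simp
  qed
  finally show ?thesis .
qed

text \<open>For \<open>card S \<ge> 2\<close> remove two different nodes with \<open>divided_power_Suc\<close>: by induction
  both results agree, so the difference \<open>(u\<^sub>j' - u\<^sub>j) \<cdot> divided_power S u 0\<close> vanishes.\<close>
lemma divided_power_0:
  assumes "finite S" "inj_on u S"
  shows "divided_power S u 0 = (if card S = 1 then 1 else 0)"
  using assms
proof (induction "card S" arbitrary: S rule: less_induct)
  case less
  show ?case
  proof (cases "card S \<le> 1")
    case True
    then consider "S = {}" | a where "S = {a}" using less.prems
      by (metis card_0_eq card_1_singletonE le_Suc_eq le_zero_eq One_nat_def)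
    then show ?thesis by cases (auto simp: divided_power_def)
  next
    case False
    then obtain j j' where jj: "j \<in> S" "j' \<in> S" "j \<noteq> j'"
      using card_le_Suc0_iff_eq[OF less.prems(1)] by auto
    have "divided_power (S - {j}) u 0 = divided_power (S - {j'}) u 0"
      using less.hyps[of "S - {j}"] less.hyps[of "S - {j'}"] less.prems jj False
      by (simp add: card_Diff_singleton inj_on_diff)
    moreover have "(u j' - u j) * divided_power S u 0 =
        (divided_power S u 1 - u j * divided_power S u 0) - (divided_power S u 1 - u j' * divided_power S u 0)"
      by (simp add: algebra_simps)
    ultimately have "(u j' - u j) * divided_power S u 0 = 0"
      using divided_power_Suc[OF less.prems jj(1), of 0] divided_power_Suc[OF less.prems jj(2), of 0]
      by simp
    moreover have "u j' \<noteq> u j" using jj less.prems by (auto simp: inj_on_def)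
    ultimately show ?thesis using False by simp
  qed
qed

lemma divided_power_eq_hcomplete:
  assumes "inj_on u {..<Suc n}"
  shows "divided_power {..<Suc n} u p = hcomplete (Suc n) (int p - int n) u"
  using assms
proof (induction n arbitrary: p)
  case 0
  have "hcomplete 1 (int p) u = u 0 ^ p"
    by (simp add: hcomplete_Suc hcomplete_0 if_distrib cong: if_cong)
  then show ?case by (simp add: divided_power_def)
next
  case (Suc n)
  note IH_n = Suc.IH and inj_Suc = Suc.prems
  have inj: "inj_on u {..<Suc n}" using inj_Suc by (rule inj_on_subset) auto
  show ?case
  proof (induction p)
    case 0
    then show ?case using divided_power_0[OF _ inj_Suc] by (simp add: hcomplete_neg)
  next
    case (Suc p)
    have "divided_power {..<Suc (Suc n)} u (Suc p) =
        u (Suc n) * divided_power {..<Suc (Suc n)} u p + divided_power {..<Suc n} u p"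
      using divided_power_Suc[OF _ inj_Suc, of "Suc n" p] by (simp add: lessThan_Suc algebra_simps)
    also have "\<dots> = u (Suc n) * hcomplete (Suc (Suc n)) (int p - int n - 1) u + hcomplete (Suc n) (int p - int n) u"
      by (simp add: Suc.IH IH_n[OF inj] diff_diff_eq add.commute)
    also have "\<dots> = hcomplete (Suc (Suc n)) (int (Suc p) - int (Suc n)) u"
      using hcomplete_Suc_rec[of "Suc n" "int p - int n" u] by simp
    finally show ?case .
  qed
qed

lemma sum_power_div_prod_diff_eq_hcomplete:
  fixes u :: "nat \<Rightarrow> complex"
  assumes "N \<ge> 1" "inj_on u {..<N}"
  shows "(\<Sum>k<N. u k ^ m / (\<Prod>l\<in>{..<N} - {k}. u k - u l)) = hcomplete N (int m - int N + 1) u"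
proof -
  obtain n where N: "N = Suc n" using assms(1) by (cases N) auto
  then have "int m - int N + 1 = int m - int n" by simp
  then show ?thesis
    using divided_power_eq_hcomplete[of u n m] assms(2) by (simp add: N divided_power_def)
qed

section \<open>The determinantal formula for \<open>C\<^sub>\<lambda>\<close>\<close>

text \<open>For \<open>K + i = 0\<close> the first coefficient contains the factor \<open>1 - q\<^sup>0 = 0\<close>, so the
  truncated exponent \<open>K + i - 1\<close> does no harm.\<close>
lemma power_times_cfun:
  assumes "u \<noteq> 0" "\<xi>0 \<noteq> 0"
  shows "u ^ i * cfun q \<gamma> s0 \<xi>0 K u =
    - \<gamma> * s0 * inverse \<xi>0 * (1 - q ^ K) * u ^ (K + i - 1)
    + (1 + \<gamma>^2 * s0^2 - \<gamma> * (q + s0^2) * q ^ K) * u ^ (K + i)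
    - \<gamma> * s0 * \<xi>0 * (1 - q ^ (K + 1)) * u ^ (K + i + 1)"
proof (cases "K + i")
  case 0
  then show ?thesis using assms unfolding cfun_def by (simp add: field_simps power2_eq_square)
next
  case (Suc m)
  then have "u ^ i * u ^ K = u * u ^ m" "u ^ (K + i) = u * u ^ m" "u ^ (K + i + 1) = u * (u * u ^ m)"
    by (simp_all flip: power_add add: add.commute)
  then show ?thesis using assms Suc unfolding cfun_def mult.assoc[symmetric]
    by (simp add: field_simps power2_eq_square)
qed

lemma sum_power_times_cfun_div_prod_diff:
  fixes u :: "nat \<Rightarrow> complex"
  assumes "N \<ge> 1" "inj_on u {..<N}" "\<forall>k<N. u k \<noteq> 0" "\<xi>0 \<noteq> 0"
  shows "(\<Sum>k<N. u k ^ i * cfun q \<gamma> s0 \<xi>0 K (u k) / (\<Prod>l\<in>{..<N} - {k}. u k - u l)) =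
    - \<gamma> * s0 * inverse \<xi>0 * (1 - q ^ K) * hcomplete N (int (K + i) + 1 - int N - 1) u
    + (1 + \<gamma>^2 * s0^2 - \<gamma> * (q + s0^2) * q ^ K) * hcomplete N (int (K + i) + 1 - int N) u
    - \<gamma> * s0 * \<xi>0 * (1 - q ^ (K + 1)) * hcomplete N (int (K + i) + 1 - int N + 1) u"
proof -
  define D where "D k = (\<Prod>l\<in>{..<N} - {k}. u k - u l)" for k
  define m where "m = int (K + i) + 1 - int N"
  define a where "a = - \<gamma> * s0 * inverse \<xi>0 * (1 - q ^ K)"
  define b where "b = 1 + \<gamma>^2 * s0^2 - \<gamma> * (q + s0^2) * q ^ K"
  define c where "c = \<gamma> * s0 * \<xi>0 * (1 - q ^ (K + 1))"
  have h: "(\<Sum>k<N. u k ^ p / D k) = hcomplete N (int p - int N + 1) u" for p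
    unfolding D_def by (rule sum_power_div_prod_diff_eq_hcomplete[OF assms(1,2)])
  have h0: "(\<Sum>k<N. u k ^ (K + i) / D k) = hcomplete N m u"
    and h1: "(\<Sum>k<N. u k ^ (K + i + 1) / D k) = hcomplete N (m + 1) u"
    unfolding h m_def by (simp_all add: algebra_simps)
  have h_1: "a * (\<Sum>k<N. u k ^ (K + i - 1) / D k) = a * hcomplete N (m - 1) u"
  proof (cases "K + i = 0")
    case False
    then have "1 \<le> K + i" by linarith
    then show ?thesis by (simp add: h m_def of_nat_diff algebra_simps)
  qed (simp add: a_def)
  have "(\<Sum>k<N. u k ^ i * cfun q \<gamma> s0 \<xi>0 K (u k) / D k) =
      (\<Sum>k<N. a * (u k ^ (K + i - 1) / D k) + b * (u k ^ (K + i) / D k) - c * (u k ^ (K + i + 1) / D k))"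
    by (rule sum.cong) (use assms(3,4) in \<open>simp_all add: power_times_cfun a_def b_def c_def
        add_divide_distrib diff_divide_distrib\<close>)
  also have "\<dots> = a * (\<Sum>k<N. u k ^ (K + i - 1) / D k) + b * (\<Sum>k<N. u k ^ (K + i) / D k)
      - c * (\<Sum>k<N. u k ^ (K + i + 1) / D k)"
    by (simp add: sum.distrib sum_subtractf sum_distrib_left)
  also have "\<dots> = a * hcomplete N (m - 1) u + b * hcomplete N m u - c * hcomplete N (m + 1) u"
    by (simp only: h_1 h0 h1)
  finally show ?thesis
    by (simp only: a_def b_def c_def D_def m_def)
qed

lemma Cfun_eq_det_hcomplete:
  fixes u :: "nat \<Rightarrow> complex"
  assumes "N \<ge> 1" "\<xi>0 \<noteq> 0" "\<forall>i<N. u i \<noteq> 0" "\<forall>i j. i < j \<longrightarrow> j < N \<longrightarrow> u i \<noteq> u j"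
  shows "Cfun q \<gamma> s0 \<xi>0 N lam u =
           det (mat N N (\<lambda>(i,j).
             - \<gamma> * s0 * inverse \<xi>0 * (1 - q ^ (lam j + (N - 1 - j)))
                 * hcomplete N (int (lam j) + int i - int j - 1) u
             + (1 + \<gamma>^2 * s0^2 - \<gamma> * (q + s0^2) * q ^ (lam j + (N - 1 - j)))
                 * hcomplete N (int (lam j) + int i - int j) u
             - \<gamma> * s0 * \<xi>0 * (1 - q ^ (lam j + (N - 1 - j) + 1))
                 * hcomplete N (int (lam j) + int i - int j + 1) u))"
    (is "_ = det (mat N N (\<lambda>(i,j). ?E i j))")
proof -
  define W where "W i k = u k ^ i / (\<Prod>l\<in>{..<N} - {k}. u k - u l)" for i k
  define C where "C k j = cfun q \<gamma> s0 \<xi>0 (lam j + (N - 1 - j)) (u k)" for k j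
  have inj: "inj_on u {..<N}"
    by (rule linorder_inj_onI') (use assms(4) in auto)
  have W_power: "(\<Sum>k<N. W i k * u k ^ (N - 1 - j)) = hcomplete N (int i - int j) u" if "j < N" for i j
  proof -
    have "(\<Sum>k<N. W i k * u k ^ (N - 1 - j)) =
        (\<Sum>k<N. u k ^ (i + (N - 1 - j)) / (\<Prod>l\<in>{..<N} - {k}. u k - u l))"
      by (simp add: W_def power_add)
    also have "\<dots> = hcomplete N (int (i + (N - 1 - j)) - int N + 1) u"
      by (rule sum_power_div_prod_diff_eq_hcomplete[OF assms(1) inj])
    also have "int (i + (N - 1 - j)) - int N + 1 = int i - int j"
      using that by simp
    finally show ?thesis .
  qed
  have "det (mat N N (\<lambda>(i,j). \<Sum>k<N. W i k * u k ^ (N - 1 - j))) = 1"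
    by (rule det_mat_unit_lower_triangular; simp only: W_power; simp add: hcomplete_neg hcomplete_zero)
  then have det_W: "det (mat N N (\<lambda>(i,j). W i j)) * vandermonde N u = 1"
    using det_mat_mult[of N W "\<lambda>k j. u k ^ (N - 1 - j)"] det_vandermonde[of N u]
      det_mat_swap[of N "\<lambda>i j. u j ^ (N - 1 - i)"] by simp
  have entry: "(\<Sum>k<N. W i k * C k j) = ?E i j" if "j < N" for i j
  proof -
    have e: "int (lam j + (N - 1 - j) + i) + 1 - int N = int (lam j) + int i - int j"
      using that by (simp add: of_nat_diff)
    have "(\<Sum>k<N. W i k * C k j) = (\<Sum>k<N. u k ^ i * cfun q \<gamma> s0 \<xi>0 (lam j + (N - 1 - j)) (u k)
        / (\<Prod>l\<in>{..<N} - {k}. u k - u l))"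
      by (simp only: W_def C_def times_divide_eq_left)
    also have "\<dots> = ?E i j"
      unfolding sum_power_times_cfun_div_prod_diff[OF assms(1) inj assms(3,2)] e ..
    finally show ?thesis .
  qed
  have "mat N N (\<lambda>(i,j). \<Sum>k<N. W i k * C k j) = mat N N (\<lambda>(i,j). ?E i j)"
    by (rule eq_matI) (simp_all add: entry)
  then have "det (mat N N (\<lambda>(i,j). W i j)) * det (mat N N (\<lambda>(i,j). C i j)) = det (mat N N (\<lambda>(i,j). ?E i j))"
    by (simp flip: det_mat_mult)
  moreover have "det (mat N N (\<lambda>(i,j). W i j)) = inverse (vandermonde N u)"
    by (rule inverse_unique[symmetric]) (use det_W in \<open>simp add: mult.commute\<close>)
  moreover have "det (mat N N (\<lambda>(i,j). C i j)) = det (mat N N (\<lambda>(i,j). C j i))"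
    by (rule det_mat_swap[symmetric])
  ultimately show ?thesis
    by (simp add: Cfun_def C_def divide_inverse mult.commute)
qed

lemma Cfun_s0_zero:
  "Cfun q \<gamma> 0 \<xi>0 N lam u = (\<Prod>j<N. 1 - \<gamma> * q * q ^ (lam j + (N - 1 - j))) * schur N lam u"
proof -
  have "det (mat N N (\<lambda>(i,j). cfun q \<gamma> 0 \<xi>0 (lam i + (N - 1 - i)) (u j))) =
        det (mat N N (\<lambda>(i,j). (1 - \<gamma> * q * q ^ (lam i + (N - 1 - i))) * u j ^ (lam i + (N - 1 - i))))"
    by (rule arg_cong[where f = det], rule eq_matI) (auto simp: cfun_def algebra_simps)
  also have "\<dots> = (\<Prod>j<N. 1 - \<gamma> * q * q ^ (lam j + (N - 1 - j))) *
       det (mat N N (\<lambda>(i,j). u j ^ (lam i + (N - 1 - i))))"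
    by (rule det_mat_scale_rows)
  also have "det (mat N N (\<lambda>(i,j). u j ^ (lam i + (N - 1 - i)))) =
      det (mat N N (\<lambda>(i,j). u i ^ (lam j + (N - 1 - j))))"
    by (rule det_mat_swap)
  finally show ?thesis unfolding Cfun_def schur_def by simp
qed

section \<open>The generating function of the \<open>c\<^sub>k\<close>\<close>

lemma geometric_has_sum:
  fixes x :: "'a::{real_normed_field, banach}"
  assumes "norm x < 1"
  shows "((\<lambda>k. x ^ k) has_sum (1 / (1 - x))) UNIV"
proof (rule norm_summable_imp_has_sum)
  show "summable (\<lambda>n. norm (x ^ n))" using assms by (simp add: norm_power summable_geometric)
  show "(\<lambda>n. x ^ n) sums (1 / (1 - x))" using geometric_sums[OF assms] by simp
qed

text \<open>\<open>c\<^sub>k(u) v\<^sup>k\<close> is a combination of two geometric progressions, with ratios \<open>uv\<close> and \<open>quv\<close>.\<close>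
lemma cfun_has_sum:
  assumes "u \<noteq> 0" "\<xi>0 \<noteq> 0" "norm (u * v) < 1" "norm (q * u * v) < 1"
  shows "((\<lambda>k. cfun q \<gamma> s0 \<xi>0 k u * v ^ k) has_sum zfun q \<gamma> s0 \<xi>0 u v) UNIV"
proof -
  define P where "P = 1 + s0^2 * \<gamma>^2 - s0 * \<gamma> * inverse (u * \<xi>0) - s0 * \<gamma> * u * \<xi>0"
  define Q where "Q = - \<gamma> * q - s0^2 * \<gamma> + s0 * \<gamma> * inverse (u * \<xi>0) + s0 * \<gamma> * q * u * \<xi>0"
  have "1 - u * v \<noteq> 0" "1 - q * u * v \<noteq> 0" using assms(3,4) by auto
  then have "P * (1 / (1 - u * v)) + Q * (1 / (1 - q * u * v)) =
      (P * (1 - q * u * v) + Q * (1 - u * v)) / ((1 - u * v) * (1 - q * u * v))"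
    by (simp add: add_frac_eq)
  also have "P * (1 - q * u * v) + Q * (1 - u * v) =
      (1 - \<gamma>) * (q - \<gamma> * s0^2) * (1 - u * v)
       + (1 - q) * (1 - \<gamma> * \<xi>0 * s0 * u) * (1 - \<gamma> * inverse \<xi>0 * s0 * v)"
    using assms(1,2) unfolding P_def Q_def by (simp add: field_simps power2_eq_square)
  finally have z: "zfun q \<gamma> s0 \<xi>0 u v = P * (1 / (1 - u * v)) + Q * (1 / (1 - q * u * v))"
    unfolding zfun_def ..
  have c: "cfun q \<gamma> s0 \<xi>0 k u * v ^ k = P * (u * v) ^ k + Q * (q * u * v) ^ k" for k
    unfolding cfun_def P_def Q_def
    by (simp add: power_mult_distrib algebra_simps power2_eq_square)
  show ?thesis
    unfolding z c by (intro has_sum_add has_sum_cmult_right geometric_has_sum assms(3,4))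
qed

section \<open>Series expansion of a determinant\<close>

lemma has_sum_sum:
  fixes f :: "'i \<Rightarrow> 'a \<Rightarrow> 'b::topological_comm_monoid_add"
  assumes "finite I" "\<And>i. i \<in> I \<Longrightarrow> (f i has_sum s i) A"
  shows "((\<lambda>x. \<Sum>i\<in>I. f i x) has_sum (\<Sum>i\<in>I. s i)) A"
  using assms by (induction I rule: finite_induct) (simp_all add: has_sum_add)

lemma abs_summable_on_prod_PiE:
  fixes f :: "'a \<Rightarrow> 'b \<Rightarrow> complex"
  assumes "finite A" "\<And>i. i \<in> A \<Longrightarrow> (\<lambda>k. norm (f i k)) summable_on UNIV"
  shows "(\<lambda>g. norm (\<Prod>i\<in>A. f i (g i))) summable_on (A \<rightarrow>\<^sub>E UNIV)"
proof (rule nonneg_bdd_above_summable_on)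
  show "bdd_above (sum (\<lambda>g. norm (\<Prod>i\<in>A. f i (g i))) ` {F. F \<subseteq> A \<rightarrow>\<^sub>E UNIV \<and> finite F})"
  proof (rule bdd_aboveI2)
    fix F :: "('a \<Rightarrow> 'b) set" assume F: "F \<in> {F. F \<subseteq> A \<rightarrow>\<^sub>E UNIV \<and> finite F}"
    define B where "B i = (\<lambda>g. g i) ` F" for i
    have fin_B: "finite (B i)" for i using F by (auto simp: B_def)
    have "F \<subseteq> PiE A B" using F by (auto simp: B_def PiE_def Pi_def)
    then have "(\<Sum>g\<in>F. norm (\<Prod>i\<in>A. f i (g i))) \<le> (\<Sum>g\<in>PiE A B. norm (\<Prod>i\<in>A. f i (g i)))"
      by (intro sum_mono2) (use fin_B assms(1) in \<open>auto simp: finite_PiE\<close>)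
    also have "\<dots> = (\<Sum>g\<in>PiE A B. \<Prod>i\<in>A. norm (f i (g i)))"
      by (simp add: prod_norm)
    also have "\<dots> = (\<Prod>i\<in>A. \<Sum>y\<in>B i. norm (f i y))"
      by (rule prod_sum_PiE[symmetric]) (use assms(1) fin_B in auto)
    also have "\<dots> \<le> (\<Prod>i\<in>A. \<Sum>\<^sub>\<infinity>k. norm (f i k))"
      by (rule prod_mono) (auto intro!: sum_nonneg finite_sum_le_infsum assms(2) fin_B)
    finally show "(\<Sum>g\<in>F. norm (\<Prod>i\<in>A. f i (g i))) \<le> (\<Prod>i\<in>A. \<Sum>\<^sub>\<infinity>k. norm (f i k))" .
  qed
qed simp

lemma has_sum_prod_PiE:
  fixes f :: "'a \<Rightarrow> 'b \<Rightarrow> complex"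
  assumes "finite A" "\<And>i. i \<in> A \<Longrightarrow> (f i has_sum s i) UNIV"
  shows "((\<lambda>g. \<Prod>i\<in>A. f i (g i)) has_sum (\<Prod>i\<in>A. s i)) (A \<rightarrow>\<^sub>E UNIV)"
proof -
  have abs: "(\<lambda>k. norm (f i k)) summable_on UNIV" if "i \<in> A" for i
    using assms(2)[OF that] summable_on_iff_abs_summable_on_complex has_sum_imp_summable by blast
  then have "(\<lambda>g. \<Prod>i\<in>A. f i (g i)) summable_on A \<rightarrow>\<^sub>E UNIV"
    using abs_summable_on_prod_PiE[OF assms(1)] summable_on_iff_abs_summable_on_complex by blast
  moreover have "(\<Sum>\<^sub>\<infinity>g\<in>A \<rightarrow>\<^sub>E UNIV. \<Prod>i\<in>A. f i (g i)) = (\<Prod>i\<in>A. \<Sum>\<^sub>\<infinity>k. f i k)"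
    using infsum_prod_PiE_abs[OF assms(1), of f "\<lambda>_. UNIV"] abs by simp
  moreover have "(\<Prod>i\<in>A. \<Sum>\<^sub>\<infinity>k. f i k) = (\<Prod>i\<in>A. s i)"
    using assms(2) by (intro prod.cong) (auto simp: has_sum_iff)
  ultimately show ?thesis by (simp add: has_sum_iff)
qed

lemma det_has_sum_PiE:
  fixes a b z :: "nat \<Rightarrow> nat \<Rightarrow> complex"
  assumes "\<And>i j. i < N \<Longrightarrow> j < N \<Longrightarrow> ((\<lambda>k. a i k * b j k) has_sum z i j) UNIV"
  shows "((\<lambda>\<kappa>. (\<Prod>i<N. a i (\<kappa> i)) * det (mat N N (\<lambda>(i,j). b j (\<kappa> i))))
           has_sum det (mat N N (\<lambda>(i,j). z i j))) ({..<N} \<rightarrow>\<^sub>E UNIV)"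
proof -
  have "((\<lambda>\<kappa>. \<Sum>p | p permutes {..<N}. signof p * (\<Prod>i<N. a i (\<kappa> i) * b (p i) (\<kappa> i)))
     has_sum (\<Sum>p | p permutes {..<N}. signof p * (\<Prod>i<N. z i (p i)))) ({..<N} \<rightarrow>\<^sub>E UNIV)"
  proof (intro has_sum_sum has_sum_cmult_right)
    fix p assume "p \<in> {p. p permutes {..<N}}"
    then have "p i < N" if "i < N" for i using permutes_in_image that by fastforce
    then show "((\<lambda>\<kappa>. \<Prod>i<N. a i (\<kappa> i) * b (p i) (\<kappa> i)) has_sum (\<Prod>i<N. z i (p i))) ({..<N} \<rightarrow>\<^sub>E UNIV)"
      by (intro has_sum_prod_PiE) (auto intro: assms)
  qed (simp add: finite_permutations)
  then show ?thesis
    by (simp add: det_mat_leibniz prod.distrib sum_distrib_left mult.left_commute)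
qed

section \<open>Injective index maps\<close>

text \<open>The exponents \<open>\<lambda>\<^sub>i + N - i\<close> of the bialternant formula, with \<open>0\<close>-based indices.\<close>
definition shifted_parts :: "nat \<Rightarrow> (nat \<Rightarrow> nat) \<Rightarrow> nat \<Rightarrow> nat" where
  "shifted_parts N lam i = lam i + (N - 1 - i)"

definition index_map :: "nat \<Rightarrow> (nat \<Rightarrow> nat) \<times> (nat \<Rightarrow> nat) \<Rightarrow> nat \<Rightarrow> nat" where
  "index_map N = (\<lambda>(lam, \<tau>). restrict (shifted_parts N lam \<circ> \<tau>) {..<N})"

lemma strict_antimono_shifted_parts:
  assumes "lam \<in> Sign N"
  shows "strict_antimono_on {..<N} (shifted_parts N lam)"
proof (rule monotone_onI)
  fix i j assume "i \<in> {..<N}" "j \<in> {..<N}" "i < j"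
  moreover have "lam j \<le> lam i" using assms calculation by (auto simp: Sign_def)
  ultimately show "shifted_parts N lam j < shifted_parts N lam i"
    by (simp add: shifted_parts_def)
qed

lemma inj_on_shifted_parts: "lam \<in> Sign N \<Longrightarrow> inj_on (shifted_parts N lam) {..<N}"
  using strict_antimono_shifted_parts strict_antimono_iff_antimono by blast

lemma strict_antimono_on_lessThan_nth:
  assumes "strict_antimono_on {..<N} f" "i < N"
  shows "f i = rev (sorted_list_of_set (f ` {..<N})) ! i"
proof -
  define xs where "xs = rev (map f [0..<N])"
  have "sorted_wrt (<) xs"
    using assms(1) unfolding xs_def sorted_wrt_rev by (auto simp: sorted_wrt_iff_nth_less monotone_on_def)
  then have "sorted_list_of_set (set xs) = xs"
    by (simp add: sorted_list_of_set_sort_remdups strict_sorted_iff distinct_remdups_id sorted_sort_id)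
  moreover have "set xs = f ` {..<N}" by (auto simp: xs_def atLeast0LessThan)
  ultimately show ?thesis using assms(2) by (simp add: xs_def rev_nth)
qed

lemma strict_antimono_on_add_diff_le:
  fixes K :: "nat \<Rightarrow> nat"
  assumes "strict_antimono_on {..<N} K"
  shows "i \<le> j \<Longrightarrow> j < N \<Longrightarrow> K j + (j - i) \<le> K i"
proof (induction j)
  case (Suc j)
  have "K (Suc j) < K j" using assms(1) Suc.prems by (auto simp: monotone_on_def)
  then show ?case using Suc by (cases "i = Suc j") auto
qed simp

lemma strict_antimono_on_eq_shifted_parts:
  fixes K :: "nat \<Rightarrow> nat"
  assumes "strict_antimono_on {..<N} K"
  obtains lam where "lam \<in> Sign N" "\<And>i. i < N \<Longrightarrow> K i = shifted_parts N lam i"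
proof
  define lam where "lam i = (if i < N then K i - (N - 1 - i) else 0)" for i
  have big: "N - 1 - i \<le> K i" if "i < N" for i
    using strict_antimono_on_add_diff_le[OF assms, of i "N - 1"] that by arith
  show "K i = shifted_parts N lam i" if "i < N" for i
    using big[OF that] that by (simp add: shifted_parts_def lam_def)
  show "lam \<in> Sign N"
    unfolding Sign_def
  proof safe
    fix i j assume ij: "i \<le> j" "j < N"
    have "K j + (j - i) \<le> K i" by (rule strict_antimono_on_add_diff_le[OF assms ij])
    then have "K j - (N - 1 - j) \<le> K i - (N - 1 - i)"
      using ij big[of i] big[of j] by arith
    then show "lam j \<le> lam i" using ij by (simp add: lam_def)
  qed (simp add: lam_def)
qed

text \<open>Sorting the values of an injective \<open>\<kappa>\<close> decreasingly gives \<open>K\<close>, and \<open>\<tau>\<close> records where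
  each value went.\<close>
lemma inj_on_lessThan_eq_strict_antimono_comp_permutation:
  fixes \<kappa> :: "nat \<Rightarrow> nat"
  assumes "inj_on \<kappa> {..<N}"
  obtains K \<tau> where "strict_antimono_on {..<N} K" "\<tau> permutes {..<N}" "\<And>i. i < N \<Longrightarrow> \<kappa> i = K (\<tau> i)"
proof -
  define S where "S = \<kappa> ` {..<N}"
  define xs where "xs = rev (sorted_list_of_set S)"
  define K where "K i = xs ! i" for i
  define \<tau> where "\<tau> i = (if i < N then inv_into {..<N} K (\<kappa> i) else i)" for i
  have len: "length xs = N" using card_image[OF assms] by (simp add: xs_def S_def)
  have K_dec: "strict_antimono_on {..<N} K"
  proof (rule monotone_onI)
    fix i j assume "i \<in> {..<N}" "j \<in> {..<N}" "i < j"
    then show "K j < K i"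
      using strict_sorted_list_of_set[of S] len
      by (auto simp: K_def xs_def rev_nth sorted_wrt_iff_nth_less)
  qed
  have "bij_betw K {..<N} S"
  proof -
    have "distinct xs" "set xs = S" by (simp_all add: xs_def S_def)
    then show ?thesis unfolding K_def using len by (intro bij_betw_nth) auto
  qed
  then have "bij_betw (inv_into {..<N} K \<circ> \<kappa>) {..<N} {..<N}"
    using assms by (intro bij_betw_trans[of _ _ S] bij_betw_inv_into) (auto simp: bij_betw_def S_def)
  then have "\<tau> permutes {..<N}"
    by (intro bij_imp_permutes) (auto simp: \<tau>_def bij_betw_def inj_on_def cong: image_cong)
  moreover have "\<kappa> i = K (\<tau> i)" if "i < N" for i
    using that \<open>bij_betw K {..<N} S\<close> by (simp add: \<tau>_def f_inv_into_f bij_betw_def S_def)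
  ultimately show ?thesis using that K_dec by blast
qed

lemma inj_on_index_map: "inj_on (index_map N) (Sign N \<times> {\<tau>. \<tau> permutes {..<N}})"
proof (rule inj_onI, clarify)
  fix lam \<tau> lam' \<tau>'
  assume lam: "lam \<in> Sign N" "lam' \<in> Sign N" and \<tau>: "\<tau> permutes {..<N}" "\<tau>' permutes {..<N}"
    and eq: "index_map N (lam, \<tau>) = index_map N (lam', \<tau>')"
  let ?K = "shifted_parts N lam" and ?K' = "shifted_parts N lam'"
  have K\<tau>: "?K (\<tau> i) = ?K' (\<tau>' i)" if "i < N" for i
    using fun_cong[OF eq, of i] that by (simp add: index_map_def)
  have "?K ` {..<N} = ?K ` \<tau> ` {..<N}" using permutes_image[OF \<tau>(1)] by simp
  also have "\<dots> = ?K' ` \<tau>' ` {..<N}" using K\<tau> by (force simp: image_iff)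
  also have "\<dots> = ?K' ` {..<N}" using permutes_image[OF \<tau>(2)] by simp
  finally have img: "?K ` {..<N} = ?K' ` {..<N}" .
  have K_eq: "?K i = ?K' i" if "i < N" for i
    using strict_antimono_on_lessThan_nth[OF strict_antimono_shifted_parts[OF lam(1)] that]
      strict_antimono_on_lessThan_nth[OF strict_antimono_shifted_parts[OF lam(2)] that] img
    by metis
  have "lam = lam'"
  proof
    fix i show "lam i = lam' i"
      using K_eq[of i] lam by (cases "i < N") (auto simp: shifted_parts_def Sign_def)
  qed
  moreover have "\<tau> = \<tau>'"
  proof
    fix i show "\<tau> i = \<tau>' i"
    proof (cases "i < N")
      case True
      show ?thesis
        using inj_on_shifted_parts[OF lam(1)] K\<tau>[OF True] \<open>lam = lam'\<close>
          permutes_in_image[OF \<tau>(1)] permutes_in_image[OF \<tau>(2)] True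
        by (auto simp: inj_on_def)
    qed (use permutes_not_in[OF \<tau>(1)] permutes_not_in[OF \<tau>(2)] in auto)
  qed
  ultimately show "lam = lam' \<and> \<tau> = \<tau>'" by simp
qed

lemma image_index_map:
  "index_map N ` (Sign N \<times> {\<tau>. \<tau> permutes {..<N}}) = {\<kappa> \<in> {..<N} \<rightarrow>\<^sub>E UNIV. inj_on \<kappa> {..<N}}"
proof (intro equalityI subsetI)
  fix \<kappa> assume "\<kappa> \<in> index_map N ` (Sign N \<times> {\<tau>. \<tau> permutes {..<N}})"
  then obtain lam \<tau> where lam: "lam \<in> Sign N" and \<tau>: "\<tau> permutes {..<N}"
    and \<kappa>: "\<kappa> = index_map N (lam, \<tau>)"
    by auto
  have "inj_on (shifted_parts N lam) (\<tau> ` {..<N})"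
    using inj_on_shifted_parts[OF lam] permutes_image[OF \<tau>] by simp
  then have "inj_on (shifted_parts N lam \<circ> \<tau>) {..<N}"
    using permutes_inj_on[OF \<tau>] by (rule comp_inj_on[rotated])
  then show "\<kappa> \<in> {\<kappa> \<in> {..<N} \<rightarrow>\<^sub>E UNIV. inj_on \<kappa> {..<N}}"
    by (auto simp: \<kappa> index_map_def inj_on_def)
next
  fix \<kappa> :: "nat \<Rightarrow> nat" assume "\<kappa> \<in> {\<kappa> \<in> {..<N} \<rightarrow>\<^sub>E UNIV. inj_on \<kappa> {..<N}}"
  then have \<kappa>: "\<kappa> \<in> {..<N} \<rightarrow>\<^sub>E UNIV" "inj_on \<kappa> {..<N}" by auto
  obtain K \<tau> where K: "strict_antimono_on {..<N} K" and \<tau>: "\<tau> permutes {..<N}"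
    and \<kappa>_eq: "\<And>i. i < N \<Longrightarrow> \<kappa> i = K (\<tau> i)"
    using inj_on_lessThan_eq_strict_antimono_comp_permutation[OF \<kappa>(2)] by blast
  obtain lam where lam: "lam \<in> Sign N" and K_eq: "\<And>i. i < N \<Longrightarrow> K i = shifted_parts N lam i"
    using strict_antimono_on_eq_shifted_parts[OF K] by blast
  have "index_map N (lam, \<tau>) = \<kappa>"
  proof
    fix i show "index_map N (lam, \<tau>) i = \<kappa> i"
    proof (cases "i < N")
      case True
      then show ?thesis
        using \<kappa>_eq K_eq permutes_in_image[OF \<tau>] by (simp add: index_map_def)
    next
      case False
      then show ?thesis using PiE_arb[OF \<kappa>(1)] by (simp add: index_map_def)
    qed
  qed
  then show "\<kappa> \<in> index_map N ` (Sign N \<times> {\<tau>. \<tau> permutes {..<N}})"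
    using lam \<tau> by force
qed

lemma bij_betw_index_map:
  "bij_betw (index_map N) (Sign N \<times> {\<tau>. \<tau> permutes {..<N}})
     {\<kappa> \<in> {..<N} \<rightarrow>\<^sub>E UNIV. inj_on \<kappa> {..<N}}"
  by (rule bij_betw_imageI[OF inj_on_index_map image_index_map])

section \<open>The Cauchy-type identity\<close>

lemma sum_permutes_index_map:
  fixes a b :: "nat \<Rightarrow> nat \<Rightarrow> complex"
  shows "(\<Sum>\<tau> | \<tau> permutes {..<N}. (\<Prod>i<N. a i (index_map N (lam, \<tau>) i)) *
            det (mat N N (\<lambda>(i,j). b j (index_map N (lam, \<tau>) i))))
     = det (mat N N (\<lambda>(i,j). a i (shifted_parts N lam j))) * det (mat N N (\<lambda>(i,j). b j (shifted_parts N lam i)))"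
proof -
  let ?K = "shifted_parts N lam"
  have "(\<Prod>i<N. a i (index_map N (lam, \<tau>) i)) * det (mat N N (\<lambda>(i,j). b j (index_map N (lam, \<tau>) i)))
      = signof \<tau> * (\<Prod>i<N. a i (?K (\<tau> i))) * det (mat N N (\<lambda>(i,j). b j (?K i)))"
    if "\<tau> permutes {..<N}" for \<tau>
  proof -
    have "mat N N (\<lambda>(i,j). b j (index_map N (lam, \<tau>) i)) = mat N N (\<lambda>(i,j). b j (?K (\<tau> i)))"
      by (rule eq_matI) (auto simp: index_map_def)
    then show ?thesis
      using det_mat_permute_rows[OF that, of "\<lambda>i j. b j (?K i)"] by (simp add: index_map_def)
  qed
  then show ?thesis
    by (simp add: det_mat_leibniz[of N "\<lambda>i j. a i (?K j)"] sum_distrib_right)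
qed

lemma Cfun_schur_has_sum:
  fixes u v :: "nat \<Rightarrow> complex"
  assumes "\<xi>0 \<noteq> 0" "\<forall>i<N. u i \<noteq> 0"
    and "\<forall>i<N. \<forall>j<N. norm (u i * v j) < 1" "\<forall>i<N. \<forall>j<N. norm (q * u i * v j) < 1"
  shows "((\<lambda>lam. Cfun q \<gamma> s0 \<xi>0 N lam u * schur N lam v) has_sum
           (det (mat N N (\<lambda>(i,j). zfun q \<gamma> s0 \<xi>0 (u i) (v j)))
             / (vandermonde N u * vandermonde N v))) (Sign N)"
proof -
  define a where "a i k = cfun q \<gamma> s0 \<xi>0 k (u i)" for i k
  define b where "b j k = v j ^ k" for j k
  define T where "T \<kappa> = (\<Prod>i<N. a i (\<kappa> i)) * det (mat N N (\<lambda>(i,j). b j (\<kappa> i)))" for \<kappa>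
  define Z where "Z = det (mat N N (\<lambda>(i,j). zfun q \<gamma> s0 \<xi>0 (u i) (v j)))"
  define P where "P = {\<tau>. \<tau> permutes {..<N}}"
  have "(T has_sum Z) ({..<N} \<rightarrow>\<^sub>E UNIV)"
    unfolding T_def Z_def
    by (rule det_has_sum_PiE) (use assms in \<open>auto simp: a_def b_def intro!: cfun_has_sum\<close>)
  then have "(T has_sum Z) {\<kappa> \<in> {..<N} \<rightarrow>\<^sub>E UNIV. inj_on \<kappa> {..<N}}"
    by (rule has_sum_cong_neutral[THEN iffD1, rotated -1])
       (auto simp: T_def det_mat_non_inj_rows[where f = "\<lambda>k j. b j k"])
  then have "((\<lambda>x. T (index_map N x)) has_sum Z) (Sign N \<times> P)"
    unfolding P_def by (subst has_sum_reindex_bij_betw[OF bij_betw_index_map])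
  then have "((\<lambda>lam. \<Sum>\<tau>\<in>P. T (index_map N (lam, \<tau>))) has_sum Z) (Sign N)"
    by (rule has_sum_Sigma') (auto simp: P_def finite_permutations)
  then have "((\<lambda>lam. det (mat N N (\<lambda>(i,j). a i (shifted_parts N lam j)))
      * det (mat N N (\<lambda>(i,j). b j (shifted_parts N lam i)))) has_sum Z) (Sign N)"
    by (simp add: P_def T_def sum_permutes_index_map)
  then have "((\<lambda>lam. det (mat N N (\<lambda>(i,j). a i (shifted_parts N lam j)))
      * det (mat N N (\<lambda>(i,j). b j (shifted_parts N lam i))) / (vandermonde N u * vandermonde N v))
      has_sum Z / (vandermonde N u * vandermonde N v)) (Sign N)"
    by (rule has_sum_divide_const)
  moreover have "det (mat N N (\<lambda>(i,j). a i (shifted_parts N lam j)))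
      * det (mat N N (\<lambda>(i,j). b j (shifted_parts N lam i))) / (vandermonde N u * vandermonde N v)
      = Cfun q \<gamma> s0 \<xi>0 N lam u * schur N lam v" for lam
    using det_mat_swap[of N "\<lambda>i j. a j (shifted_parts N lam i)"]
      det_mat_swap[of N "\<lambda>i j. b i (shifted_parts N lam j)"]
    by (simp add: Cfun_def schur_def a_def b_def shifted_parts_def)
  ultimately show ?thesis by (simp add: Z_def)
qed

theorem mainTheorem10:
  fixes N :: nat and q \<gamma> s0 \<xi>0 :: complex and u v :: "nat \<Rightarrow> complex"
  assumes "N \<ge> 1"
    and "\<xi>0 \<noteq> 0"
    and "\<forall>i<N. u i \<noteq> 0"
    and "\<forall>i j. i < j \<longrightarrow> j < N \<longrightarrow> u i \<noteq> u j"
    and "\<forall>i j. i < j \<longrightarrow> j < N \<longrightarrow> v i \<noteq> v j"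
    and "\<forall>i<N. \<forall>j<N. norm (u i * v j) < 1"
    and "\<forall>i<N. \<forall>j<N. norm (q * u i * v j) < 1"
  shows "((\<lambda>lam. Cfun q \<gamma> s0 \<xi>0 N lam u * schur N lam v) has_sum
           (det (mat N N (\<lambda>(i,j). zfun q \<gamma> s0 \<xi>0 (u i) (v j)))
             / (vandermonde N u * vandermonde N v))) (Sign N)
    \<and> (\<forall>lam\<in>Sign N. Cfun q \<gamma> s0 \<xi>0 N lam u =
           det (mat N N (\<lambda>(i,j).
             - \<gamma> * s0 * inverse \<xi>0 * (1 - q ^ (lam j + (N - 1 - j)))
                 * hcomplete N (int (lam j) + int i - int j - 1) u
             + (1 + \<gamma>^2 * s0^2 - \<gamma> * (q + s0^2) * q ^ (lam j + (N - 1 - j)))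
                 * hcomplete N (int (lam j) + int i - int j) u
             - \<gamma> * s0 * \<xi>0 * (1 - q ^ (lam j + (N - 1 - j) + 1))
                 * hcomplete N (int (lam j) + int i - int j + 1) u)))
    \<and> (s0 = 0 \<longrightarrow> (\<forall>lam\<in>Sign N. Cfun q \<gamma> s0 \<xi>0 N lam u =
           (\<Prod>j<N. (1 - \<gamma> * q * q ^ (lam j + (N - 1 - j)))) * schur N lam u))"
  using Cfun_schur_has_sum[OF assms(2,3,6,7)] Cfun_eq_det_hcomplete[OF assms(1-4)] Cfun_s0_zero
  by blast

end
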